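(* Let $(x_i)_{i\in\mathbf Z}$ be an admissible frontier, embedded in the plane as the lattice path $(P_i)_{i\in\mathbf Z}$. Then there exists a unique $SL_2$-tiling $t:\mathbf Z^2\to\mathbf N$ extending the embedding, i.e. with $t(P_i)=1$ for all $i$. Moreover, for every point $M$ below the frontier, if the word of $M$ is $x_1x_2\cdots x_{n+1}$ (with $n\ge1$, $x_i\in\{x,y\}$), then $$t(M)=(1,1)\,M(x_2)M(x_3)\cdots M(x_n)\begin{pmatrix}1\\1\end{pmatrix},$$ where $M(x)=\begin{pmatrix}1&1\\0&1\end{pmatrix}$, $M(y)=\begin{pmatrix}1&0\\1&1\end{pmatrix}$ (empty product $=$ identity).
   Context: Use Cartesian coordinates on $\mathbf Z^2$ (first coordinate to the right, second upward). An $SL_2$-tiling with values in a commutative ring (or semiring inside a ring) $R$ is a map $t:\mathbf Z^2\to R$ such that for all $(a,b)\in\mathbf Z^2$: $t(a,b+1)\,t(a+1,b)-t(a,b)\,t(a+1,b+1)=1$ (every connected $2\times2$ block, read as displayed in the plane, has determinant $1$). A frontier is a bi-infinite word $(x_i)_{i\in\mathbf Z}$ over $\{x,y\}$; it is admissible if neither $(x_n)_{n\ge0}$ nor $(x_n)_{n\le0}$ is ultimately constant. It is embedded (up to translation) as lattice points $P_i$, $i\in\mathbf Z$, with $P_i-P_{i-1}=(1,0)$ if $x_i=x$ and $(0,1)$ if $x_i=y$. A point $M=(u,v)$ not on the path is below the frontier if some path point $(u,v')$ has $v'>v$. For such $M$, let $L=P_r$ be the path point in row $v$ with largest first coordinate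 ($<u$), and $U=P_s$ the path point in column $u$ with smallest second coordinate ($>v$); then $r<s$ and the word of $M$ is $x_{r+1}x_{r+2}\cdots x_s$ (it begins with $y$ and ends with $x$). *)

theory Defs
  imports "HOL-Analysis.Analysis"
begin

datatype letter = X | Y

definition sl2_tiling :: "(int \<times> int \<Rightarrow> nat) \<Rightarrow> bool" where
  "sl2_tiling t \<longleftrightarrow>
     (\<forall>a b. int (t (a, b+1)) * int (t (a+1, b)) - int (t (a, b)) * int (t (a+1, b+1)) = 1)"

definition admissible :: "(int \<Rightarrow> letter) \<Rightarrow> bool" where
  "admissible w \<longleftrightarrow>
     \<not> (\<exists>N c. \<forall>n\<ge>N. w n = c) \<and> \<not> (\<exists>N c. \<forall>n\<le>N. w n = c)"

definition step :: "letter \<Rightarrow> int \<times> int" where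
  "step l = (if l = X then (1, 0) else (0, 1))"

definition embedding :: "(int \<Rightarrow> letter) \<Rightarrow> (int \<Rightarrow> int \<times> int) \<Rightarrow> bool" where
  "embedding w P \<longleftrightarrow> (\<forall>i. P i = P (i - 1) + step (w i))"

definition letter_mat :: "letter \<Rightarrow> int ^ 2 ^ 2" where
  "letter_mat l = (if l = X
     then (\<chi> i j. if i = 2 \<and> j = 1 then 0 else 1)
     else (\<chi> i j. if i = 1 \<and> j = 2 then 0 else 1))"

definition word_value :: "letter list \<Rightarrow> int" where
  "word_value ls =
     (((\<chi> i j. 1) :: int ^ 2 ^ 1) ** foldr (\<lambda>l A. letter_mat l ** A) ls (mat 1)
        ** ((\<chi> i j. 1) :: int ^ 1 ^ 2)) $ 1 $ 1"

end

theory Submission imports Defs begin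

(* Walk along the frontier carrying a basis (A_i, B_i) of Z^2 with
   det(A_i, B_i) = 1: start with the standard basis at index 0, and at a letter x
   replace A by A + B, at a letter y replace B by A + B.  A_i only changes when the
   path moves right, so it depends only on the column of P_i; likewise B_i depends
   only on the row.  Setting t(u, v) = det(A(u), B(v)) gives 1 on the path, and
   since consecutive column (resp. row) vectors have determinant 1, the Pluecker
   relation makes t an SL_2-tiling; positivity follows from a monotonicity
   invariant of the walk.  Uniqueness: a tiling with values in N has positive
   entries, so every 2x2 block determines a corner entry from the other three; an
   induction along the path fills in every point below the frontier, and the
   points above follow by rotating the plane by 180 degrees.  Finally, for M below
   the frontier with word y m x, t(M) = det(A_s, B_r) is computed by running the
   walk over y m x, which is the matrix product defining word_value. *)

definition det2 :: "int \<times> int \<Rightarrow> int \<times> int \<Rightarrow> int" where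
  "det2 p q = fst p * snd q - snd p * fst q"

lemma det2_add_left [simp]: "det2 (p + q) r = det2 p r + det2 q r"
  by (simp add: det2_def algebra_simps)

lemma det2_add_right [simp]: "det2 r (p + q) = det2 r p + det2 r q"
  by (simp add: det2_def algebra_simps)

lemma det2_self [simp]: "det2 p p = 0"
  by (simp add: det2_def)

(* The three-term Pluecker relation: it turns "consecutive determinants are 1"
   into the SL_2 condition for t(u, v) = det(A(u), B(v)). *)
lemma det2_pluecker: "det2 p s * det2 q r - det2 p r * det2 q s = det2 p q * det2 s r"
  by (simp add: det2_def algebra_simps)

lemma letter_neq_X [simp]: "l \<noteq> X \<longleftrightarrow> l = Y"
  by (cases l) auto

lemma letter_neq_Y [simp]: "l \<noteq> Y \<longleftrightarrow> l = X"
  by (cases l) auto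

section \<open>The basis walk along a frontier\<close>

type_synonym basis = "(int \<times> int) \<times> (int \<times> int)"

fun move :: "letter \<Rightarrow> basis \<Rightarrow> basis" where
  "move X (A, B) = (A + B, B)"
| "move Y (A, B) = (A, A + B)"

fun unmove :: "letter \<Rightarrow> basis \<Rightarrow> basis" where
  "unmove X (A, B) = (A - B, B)"
| "unmove Y (A, B) = (A, B - A)"

lemma move_unmove: "move l (unmove l S) = S"
  by (cases l; cases S) auto

lemma det2_move: "det2 (fst (move l S)) (snd (move l S)) = det2 (fst S) (snd S)"
  by (cases l; cases S) auto

primrec basis_fwd :: "(int \<Rightarrow> letter) \<Rightarrow> nat \<Rightarrow> basis" where
  "basis_fwd w 0 = ((1, 0), (0, 1))"
| "basis_fwd w (Suc n) = move (w (int n + 1)) (basis_fwd w n)"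

primrec basis_bwd :: "(int \<Rightarrow> letter) \<Rightarrow> nat \<Rightarrow> basis" where
  "basis_bwd w 0 = ((1, 0), (0, 1))"
| "basis_bwd w (Suc n) = unmove (w (- int n)) (basis_bwd w n)"

definition basis_at :: "(int \<Rightarrow> letter) \<Rightarrow> int \<Rightarrow> basis" where
  "basis_at w i = (if i \<ge> 0 then basis_fwd w (nat i) else basis_bwd w (nat (- i)))"

lemma basis_at_step: "basis_at w i = move (w i) (basis_at w (i - 1))"
proof (cases "i \<ge> 1")
  case True
  then have "nat i = Suc (nat (i - 1))" by simp
  then show ?thesis using True by (simp add: basis_at_def)
next
  case False
  then have "nat (- (i - 1)) = Suc (nat (- i))" by simp
  then have "basis_at w (i - 1) = unmove (w i) (basis_at w i)"
    using False by (simp add: basis_at_def)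
  then show ?thesis by (simp add: move_unmove)
qed

lemma basis_at_det: "det2 (fst (basis_at w i)) (snd (basis_at w i)) = 1"
proof (induction i rule: int_induct[where k = 0])
  case base
  then show ?case by (simp add: basis_at_def det2_def)
next
  case (step1 i)
  then show ?case using basis_at_step[of w "i + 1"] det2_move by simp
next
  case (step2 i)
  then show ?case using basis_at_step[of w i] det2_move by metis
qed

lemma basis_at_fold:
  "r \<le> s \<Longrightarrow> basis_at w s = fold move (map w [r + 1..s]) (basis_at w r)"
proof (induction s rule: int_ge_induct)
  case base
  then show ?case by simp
next
  case (step s)
  then have "[r + 1..s + 1] = [r + 1..s] @ [s + 1]"
    using upto_rec2[of "r + 1" "s + 1"] by simp
  then show ?case using step basis_at_step[of w "s + 1"] by simp
qed

(* Positivity: for r \<le> s, det(A_s, B_r) \<ge> 1 and det(A_r, B_s) \<ge> 1; these give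
   t \<ge> 1 below and above the frontier.  The two sign conditions det(A_r, A_s) \<ge> 0
   and det(B_s, B_r) \<ge> 0 are carried along to make the induction go through. *)
lemma basis_at_pos:
  "r \<le> s \<Longrightarrow>
     det2 (fst (basis_at w s)) (snd (basis_at w r)) \<ge> 1
   \<and> det2 (fst (basis_at w r)) (fst (basis_at w s)) \<ge> 0
   \<and> det2 (snd (basis_at w s)) (snd (basis_at w r)) \<ge> 0
   \<and> det2 (fst (basis_at w r)) (snd (basis_at w s)) \<ge> 1"
proof (induction s rule: int_ge_induct)
  case base
  then show ?case using basis_at_det[of w r] by simp
next
  case (step s)
  obtain A B where AB: "basis_at w s = (A, B)" by (metis surj_pair)
  have "basis_at w (s + 1) = move (w (s + 1)) (A, B)"
    using basis_at_step[of w "s + 1"] AB by simp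
  then show ?case using step(2) AB by (cases "w (s + 1)") auto
qed

section \<open>Words and the matrix product\<close>

(* cont_step l multiplies a column vector by M(l), so continuant ls is the vector
   M(l_1) ... M(l_k) (1,1)^T. *)
fun cont_step :: "letter \<Rightarrow> int \<times> int \<Rightarrow> int \<times> int" where
  "cont_step X (p, q) = (p + q, q)"
| "cont_step Y (p, q) = (p, p + q)"

definition continuant :: "letter list \<Rightarrow> int \<times> int" where
  "continuant ls = foldr cont_step ls (1, 1)"

lemma matrix_product_column:
  "foldr (\<lambda>l A. letter_mat l ** A) ls (mat 1) ** ((\<chi> i j. 1) :: int ^ 1 ^ 2)
   = (\<chi> i j. if i = 1 then fst (continuant ls) else snd (continuant ls))"
proof (induction ls)
  case Nil
  show ?case by (simp add: continuant_def vec_eq_iff)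
next
  case (Cons l ls)
  obtain p q where pq: "continuant ls = (p, q)" by force
  have "foldr (\<lambda>l A. letter_mat l ** A) (l # ls) (mat 1) ** ((\<chi> i j. 1) :: int ^ 1 ^ 2)
    = letter_mat l ** (foldr (\<lambda>l A. letter_mat l ** A) ls (mat 1) ** ((\<chi> i j. 1) :: int ^ 1 ^ 2))"
    by (simp add: matrix_mul_assoc)
  also have "\<dots> = letter_mat l ** (\<chi> i j. if i = 1 then p else q)"
    using Cons.IH pq by (simp only: prod.sel)
  also have "\<dots> = (\<chi> i j. if i = 1 then fst (continuant (l # ls)) else snd (continuant (l # ls)))"
    using pq by (cases l)
      (auto simp: continuant_def vec_eq_iff matrix_matrix_mult_def sum_2 forall_2 letter_mat_def)
  finally show ?case .
qed

lemma word_value_continuant: "word_value ls = fst (continuant ls) + snd (continuant ls)"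
  unfolding word_value_def matrix_mul_assoc[symmetric] matrix_product_column
  by (simp add: matrix_matrix_mult_def sum_2)

(* coeff_step records how the new A of the walk is a combination of the old A, B;
   it is cont_step with the roles of the two coordinates exchanged. *)
fun coeff_step :: "letter \<Rightarrow> int \<times> int \<Rightarrow> int \<times> int" where
  "coeff_step X (p, q) = (p, p + q)"
| "coeff_step Y (p, q) = (p + q, q)"

lemma det2_fold_move:
  "det2 (fst (fold move ls (A, B))) C
   = fst (foldr coeff_step ls (1, 0)) * det2 A C + snd (foldr coeff_step ls (1, 0)) * det2 B C"
proof (induction ls arbitrary: A B)
  case Nil
  then show ?case by simp
next
  case (Cons l ls)
  obtain p q where pq: "foldr coeff_step ls (1, 0) = (p, q)" by force
  show ?case using Cons[of "fst (move l (A, B))" "snd (move l (A, B))"] pq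
    by (cases l) (auto simp: algebra_simps)
qed

lemma coeff_step_continuant: "foldr coeff_step ls (1, 1) = prod.swap (continuant ls)"
proof (induction ls)
  case Nil
  then show ?case by (simp add: continuant_def)
next
  case (Cons l ls)
  then show ?case by (cases l; cases "continuant ls") (auto simp: continuant_def)
qed

lemma det2_fold_move_word:
  assumes "det2 A B = 1"
  shows "det2 (fst (fold move (Y # m @ [X]) (A, B))) B = word_value m"
proof -
  have "foldr coeff_step (Y # m @ [X]) (1, 0) = coeff_step Y (foldr coeff_step m (1, 1))"
    by simp
  then have "fst (foldr coeff_step (Y # m @ [X]) (1, 0)) = word_value m"
    using coeff_step_continuant[of m] by (cases "continuant m") (simp add: word_value_continuant)
  then show ?thesis using assms by (simp only: det2_fold_move det2_self)
qed

lemma unit_steps_mono: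
  fixes f :: "int \<Rightarrow> int"
  assumes steps: "\<And>i. f i - f (i - 1) \<in> {0, 1}" and "i \<le> j"
  shows "f i \<le> f j"
  using assms(2)
proof (induction j rule: int_ge_induct)
  case base then show ?case by simp
next
  case (step j) then show ?case using steps[of "j + 1"] by auto
qed

lemma unit_steps_cross:
  fixes f :: "int \<Rightarrow> int"
  assumes steps: "\<And>i. f i - f (i - 1) \<in> {0, 1}" and "f i \<le> u" "u < f j"
  shows "\<exists>k. f (k - 1) = u \<and> f k = u + 1"
proof -
  have "i \<le> j" using unit_steps_mono[of f, OF steps, of j i] assms(2,3) by linarith
  then show ?thesis using assms(2,3)
  proof (induction j rule: int_ge_induct)
    case base then show ?case by simp
  next
    case (step j)
    show ?case
    proof (cases "u < f j")
      case True then show ?thesis using step by simp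
    next
      case False
      then show ?thesis using step(4) steps[of "j + 1"] by (intro exI[of _ "j + 1"]) auto
    qed
  qed
qed

lemma unit_steps_unbounded_above:
  fixes f :: "int \<Rightarrow> int"
  assumes steps: "\<And>i. f i - f (i - 1) \<in> {0, 1}" and up: "\<And>N. \<exists>n\<ge>N. f (n - 1) < f n"
  shows "\<exists>n. c \<le> f n"
proof -
  have "\<exists>n. f 0 + int k \<le> f n" for k
  proof (induction k)
    case 0 then show ?case by auto
  next
    case (Suc k)
    then obtain n where n: "f 0 + int k \<le> f n" by auto
    obtain m where m: "m \<ge> n + 1" "f (m - 1) < f m" using up by blast
    have "f n \<le> f (m - 1)" using unit_steps_mono[of f, OF steps] m(1) by simp
    then show ?case using n m(2) by (intro exI[of _ m]) simp
  qed
  from this[of "nat (c - f 0)"] obtain n where "f 0 + int (nat (c - f 0)) \<le> f n" ..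
  then show ?thesis by (intro exI[of _ n]) linarith
qed

lemma unit_steps_unbounded_below:
  fixes f :: "int \<Rightarrow> int"
  assumes steps: "\<And>i. f i - f (i - 1) \<in> {0, 1}" and down: "\<And>N. \<exists>n\<le>N. f (n - 1) < f n"
  shows "\<exists>n. f n \<le> c"
proof -
  have "\<exists>n. f n \<le> f 0 - int k" for k
  proof (induction k)
    case 0 then show ?case by auto
  next
    case (Suc k)
    then obtain n where n: "f n \<le> f 0 - int k" by auto
    obtain m where m: "m \<le> n" "f (m - 1) < f m" using down by blast
    have "f m \<le> f n" using unit_steps_mono[of f, OF steps] m(1) by simp
    then show ?case using n m(2) by (intro exI[of _ "m - 1"]) simp
  qed
  from this[of "nat (f 0 - c)"] obtain n where "f n \<le> f 0 - int (nat (f 0 - c))" ..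
  then show ?thesis by (intro exI[of _ n]) linarith
qed

lemma unit_steps_surj:
  fixes f :: "int \<Rightarrow> int"
  assumes steps: "\<And>i. f i - f (i - 1) \<in> {0, 1}"
    and up: "\<And>N. \<exists>n\<ge>N. f (n - 1) < f n" and down: "\<And>N. \<exists>n\<le>N. f (n - 1) < f n"
  shows "\<exists>i. f i = u"
proof -
  obtain i where "f i \<le> u" using unit_steps_unbounded_below[OF steps down] by blast
  moreover obtain j where "u + 1 \<le> f j" using unit_steps_unbounded_above[OF steps up] by blast
  ultimately show ?thesis using unit_steps_cross[of f, OF steps, of i u j] by auto
qed

section \<open>$SL_2$-tilings with values in $\mathbf{N}$\<close>

lemma sl2_tilingD: "sl2_tiling t \<Longrightarrow>
  int (t (a, b + 1)) * int (t (a + 1, b)) - int (t (a, b)) * int (t (a + 1, b + 1)) = 1"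
  unfolding sl2_tiling_def by blast

(* An entry 0 would make the determinant of the block below-right of it \<le> 0. *)
lemma sl2_tiling_pos:
  assumes "sl2_tiling t" shows "t (a, b) > 0"
proof (rule ccontr)
  assume "\<not> t (a, b) > 0"
  then have "- (int (t (a, b - 1)) * int (t (a + 1, b))) = 1"
    using sl2_tilingD[OF assms, of a "b - 1"] by simp
  moreover have "int (t (a, b - 1)) * int (t (a + 1, b)) \<ge> 0" by simp
  ultimately show False by linarith
qed

(* In a block, the lower-right entry is determined by the other three, since the
   upper-left one is a positive factor. *)
lemma sl2_tiling_determined:
  assumes t1: "sl2_tiling t1" and t2: "sl2_tiling t2"
    and "t1 (u - 1, v) = t2 (u - 1, v)" "t1 (u, v + 1) = t2 (u, v + 1)"
    and "t1 (u - 1, v + 1) = t2 (u - 1, v + 1)"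
  shows "t1 (u, v) = t2 (u, v)"
proof -
  have "int (t1 (u - 1, v + 1)) * int (t1 (u, v)) = int (t1 (u - 1, v + 1)) * int (t2 (u, v))"
    using sl2_tilingD[OF t1, of "u - 1" v] sl2_tilingD[OF t2, of "u - 1" v] assms(3-5)
    by (simp add: algebra_simps)
  then show ?thesis using sl2_tiling_pos[OF t1, of "u - 1" "v + 1"] by simp
qed

lemma sl2_tiling_rotate:
  assumes "sl2_tiling t" shows "sl2_tiling (\<lambda>p. t (- p))"
  unfolding sl2_tiling_def
proof (intro allI)
  fix a b :: int
  show "int (t (- (a, b + 1))) * int (t (- (a + 1, b))) - int (t (- (a, b))) * int (t (- (a + 1, b + 1))) = 1"
    using sl2_tilingD[OF assms, of "- (a + 1)" "- (b + 1)"] by (simp add: algebra_simps)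
qed

lemma embedding_rotate:
  assumes "embedding w P" shows "embedding (\<lambda>i. w (1 - i)) (\<lambda>i. - P (- i))"
  unfolding embedding_def
proof
  fix i
  have "P (1 - i) = P (1 - i - 1) + step (w (1 - i))"
    using assms unfolding embedding_def by blast
  then show "- P (- i) = - P (- (i - 1)) + step (w (1 - i))" by simp
qed

context
  fixes w :: "int \<Rightarrow> letter" and P :: "int \<Rightarrow> int \<times> int"
  assumes emb: "embedding w P"
begin

lemma path_step: "P i = P (i - 1) + step (w i)"
  using emb unfolding embedding_def by blast

lemma path_fst_step: "fst (P i) = fst (P (i - 1)) + (if w i = X then 1 else 0)"
  using path_step[of i] by (cases "w i") (auto simp: step_def)

lemma path_snd_step: "snd (P i) = snd (P (i - 1)) + (if w i = Y then 1 else 0)"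
  using path_step[of i] by (cases "w i") (auto simp: step_def)

lemma path_fst_unit_steps: "fst (P i) - fst (P (i - 1)) \<in> {0, 1}"
  using path_fst_step[of i] by simp

lemma path_snd_unit_steps: "snd (P i) - snd (P (i - 1)) \<in> {0, 1}"
  using path_snd_step[of i] by simp

lemma path_fst_mono: "i \<le> j \<Longrightarrow> fst (P i) \<le> fst (P j)"
  using unit_steps_mono[of "\<lambda>i. fst (P i)", OF path_fst_unit_steps] .

lemma path_snd_mono: "i \<le> j \<Longrightarrow> snd (P i) \<le> snd (P j)"
  using unit_steps_mono[of "\<lambda>i. snd (P i)", OF path_snd_unit_steps] .

lemma fst_basis_at_column_forward:
  "i \<le> j \<Longrightarrow> fst (P i) = fst (P j) \<Longrightarrow> fst (basis_at w i) = fst (basis_at w j)"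
proof (induction j rule: int_ge_induct)
  case base then show ?case by simp
next
  case (step j)
  have "fst (P i) \<le> fst (P j)" "fst (P j) \<le> fst (P (j + 1))" using path_fst_mono step(1) by auto
  then have "fst (P j) = fst (P i)" "w (j + 1) = Y"
    using step(3) path_fst_step[of "j + 1"] by (auto split: if_splits)
  then show ?case using step basis_at_step[of w "j + 1"] by (cases "basis_at w j") auto
qed

lemma fst_basis_at_column:
  assumes "fst (P i) = fst (P j)" shows "fst (basis_at w i) = fst (basis_at w j)"
proof (cases "i \<le> j")
  case True
  then show ?thesis using fst_basis_at_column_forward assms by blast
next
  case False
  then show ?thesis using fst_basis_at_column_forward[of j i] assms by simp
qed

lemma snd_basis_at_row_forward:
  "i \<le> j \<Longrightarrow> snd (P i) = snd (P j) \<Longrightarrow> snd (basis_at w i) = snd (basis_at w j)"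
proof (induction j rule: int_ge_induct)
  case base then show ?case by simp
next
  case (step j)
  have "snd (P i) \<le> snd (P j)" "snd (P j) \<le> snd (P (j + 1))" using path_snd_mono step(1) by auto
  then have "snd (P j) = snd (P i)" "w (j + 1) = X"
    using step(3) path_snd_step[of "j + 1"] by (auto split: if_splits)
  then show ?case using step basis_at_step[of w "j + 1"] by (cases "basis_at w j") auto
qed

lemma snd_basis_at_row:
  assumes "snd (P i) = snd (P j)" shows "snd (basis_at w i) = snd (basis_at w j)"
proof (cases "i \<le> j")
  case True
  then show ?thesis using snd_basis_at_row_forward assms by blast
next
  case False
  then show ?thesis using snd_basis_at_row_forward[of j i] assms by simp
qed

(* Induction on s - r: the
   corner is either reached along a straight run, or is the lower-right entry of
   a block whose other three entries are closer to the path. *)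
lemma tilings_agree_below:
  assumes t1: "sl2_tiling t1" and t2: "sl2_tiling t2"
    and p1: "\<forall>i. t1 (P i) = 1" and p2: "\<forall>i. t2 (P i) = 1"
  shows "r \<le> s \<Longrightarrow> t1 (fst (P s), snd (P r)) = t2 (fst (P s), snd (P r))"
proof (induction "nat (s - r)" arbitrary: r s rule: less_induct)
  case less
  consider (on_path) "s = r" | (row_run) "r < s" "w (r + 1) = X" | (column_run) "r < s" "w s = Y"
    | (block) "r < s" "w (r + 1) = Y" "w s = X"
    using less.prems by (cases "s = r"; cases "w (r + 1)"; cases "w s") auto
  then show ?case
  proof cases
    case on_path
    then show ?thesis using p1 p2 by (metis prod.collapse)
  next
    case row_run
    then show ?thesis using less.hyps[of s "r + 1"] path_snd_step[of "r + 1"] by simp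
  next
    case column_run
    then show ?thesis using less.hyps[of "s - 1" r] path_fst_step[of s] by simp
  next
    case block
    then have "r + 1 \<le> s - 1" by (cases "s = r + 1") auto
    then have "t1 (fst (P (s - 1)), snd (P r)) = t2 (fst (P (s - 1)), snd (P r))"
      "t1 (fst (P s), snd (P (r + 1))) = t2 (fst (P s), snd (P (r + 1)))"
      "t1 (fst (P (s - 1)), snd (P (r + 1))) = t2 (fst (P (s - 1)), snd (P (r + 1)))"
      using less.hyps[of "s - 1" r] less.hyps[of s "r + 1"] less.hyps[of "s - 1" "r + 1"] by auto
    then show ?thesis
      using sl2_tiling_determined[OF t1 t2, of "fst (P s)" "snd (P r)"] block
        path_fst_step[of s] path_snd_step[of "r + 1"] by simp
  qed
qed

lemma word_of_point:
  assumes off: "\<forall>i. P i \<noteq> (u, v)" and r: "snd (P r) = v" "fst (P r) < u"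
    and r_max: "\<forall>i. snd (P i) = v \<and> fst (P i) < u \<longrightarrow> fst (P i) \<le> fst (P r)"
    and s: "fst (P s) = u" "snd (P s) > v"
    and s_min: "\<forall>i. fst (P i) = u \<and> snd (P i) > v \<longrightarrow> snd (P s) \<le> snd (P i)"
  shows "r < s" and "map w [r + 1..s] = Y # map w [r + 2..s - 1] @ [X]"
proof -
  show rs: "r < s" using path_fst_mono[of s r] r s by force
  have wr: "w (r + 1) = Y"
  proof (rule ccontr)
    assume "w (r + 1) \<noteq> Y"
    then have "fst (P (r + 1)) = fst (P r) + 1" "snd (P (r + 1)) = v"
      using path_fst_step[of "r + 1"] path_snd_step[of "r + 1"] r by auto
    moreover have "fst (P (r + 1)) \<noteq> u" using off \<open>snd (P (r + 1)) = v\<close> by (metis prod.collapse)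
    moreover have "fst (P (r + 1)) \<le> u" using path_fst_mono[of "r + 1" s] rs s by simp
    ultimately show False using r_max by force
  qed
  have ws: "w s = X"
  proof (rule ccontr)
    assume "w s \<noteq> X"
    then have "snd (P (s - 1)) = snd (P s) - 1" "fst (P (s - 1)) = u"
      using path_fst_step[of s] path_snd_step[of s] s by auto
    moreover have "snd (P (s - 1)) \<noteq> v" using off \<open>fst (P (s - 1)) = u\<close> by (metis prod.collapse)
    moreover have "snd (P (s - 1)) \<ge> v" using path_snd_mono[of r "s - 1"] rs r by simp
    ultimately show False using s_min by force
  qed
  have "r + 2 \<le> s" using rs wr ws by (cases "s = r + 1") auto
  then have "[r + 1..s] = (r + 1) # [r + 2..s - 1] @ [s]"
    using upto_rec1[of "r + 1" s] upto_rec2[of "r + 2" s] by (simp add: add.assoc)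
  then show "map w [r + 1..s] = Y # map w [r + 2..s - 1] @ [X]" using wr ws by simp
qed

lemma det2_basis_at_word:
  assumes "r < s" and "map w [r + 1..s] = Y # m @ [X]"
  shows "det2 (fst (basis_at w s)) (snd (basis_at w r)) = word_value m"
  using basis_at_fold[of r s w] assms det2_fold_move_word[OF basis_at_det[of w r]] by simp

end

(* The region above the frontier is the region below the rotated frontier. *)
lemma tilings_agree_above:
  assumes emb: "embedding w P" and t1: "sl2_tiling t1" and t2: "sl2_tiling t2"
    and p1: "\<forall>i. t1 (P i) = 1" and p2: "\<forall>i. t2 (P i) = 1" and "r \<le> s"
  shows "t1 (fst (P r), snd (P s)) = t2 (fst (P r), snd (P s))"
  using tilings_agree_below[OF embedding_rotate[OF emb] sl2_tiling_rotate[OF t1]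
      sl2_tiling_rotate[OF t2], of "- s" "- r"] p1 p2 \<open>r \<le> s\<close> by simp

section \<open>The tiling of an admissible frontier\<close>

(* A(u): the first vector of the basis at any path point in column u; B(v): the
   second vector at any path point in row v.  The choice does not matter by
   fst_basis_at_column and snd_basis_at_row. *)
definition column_vector :: "(int \<Rightarrow> letter) \<Rightarrow> (int \<Rightarrow> int \<times> int) \<Rightarrow> int \<Rightarrow> int \<times> int" where
  "column_vector w P u = fst (basis_at w (SOME i. fst (P i) = u))"

definition row_vector :: "(int \<Rightarrow> letter) \<Rightarrow> (int \<Rightarrow> int \<times> int) \<Rightarrow> int \<Rightarrow> int \<times> int" where
  "row_vector w P v = snd (basis_at w (SOME i. snd (P i) = v))"

definition frontier_tiling :: "(int \<Rightarrow> letter) \<Rightarrow> (int \<Rightarrow> int \<times> int) \<Rightarrow> int \<times> int \<Rightarrow> nat" where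
  "frontier_tiling w P p = nat (det2 (column_vector w P (fst p)) (row_vector w P (snd p)))"

lemma column_vector_eq:
  assumes "embedding w P" and "fst (P i) = u" shows "column_vector w P u = fst (basis_at w i)"
proof -
  define j where "j = (SOME i. fst (P i) = u)"
  have "fst (P j) = u" unfolding j_def using assms(2) by (rule someI)
  then have "fst (basis_at w j) = fst (basis_at w i)"
    using fst_basis_at_column[OF assms(1), of j i] assms(2) by simp
  then show ?thesis unfolding column_vector_def j_def[symmetric] .
qed

lemma row_vector_eq:
  assumes "embedding w P" and "snd (P i) = v" shows "row_vector w P v = snd (basis_at w i)"
proof -
  define j where "j = (SOME i. snd (P i) = v)"
  have "snd (P j) = v" unfolding j_def using assms(2) by (rule someI)
  then have "snd (basis_at w j) = snd (basis_at w i)"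
    using snd_basis_at_row[OF assms(1), of j i] assms(2) by simp
  then show ?thesis unfolding row_vector_def j_def[symmetric] .
qed

context
  fixes w :: "int \<Rightarrow> letter" and P :: "int \<Rightarrow> int \<times> int"
  assumes adm: "admissible w" and emb: "embedding w P"
begin

lemma letter_occurs_above: "\<exists>n\<ge>N. w n = l"
proof (rule ccontr)
  assume "\<not> ?thesis"
  then have "\<forall>n\<ge>N. w n = (if l = X then Y else X)" by (cases l) auto
  then show False using adm unfolding admissible_def by blast
qed

lemma letter_occurs_below: "\<exists>n\<le>N. w n = l"
proof (rule ccontr)
  assume "\<not> ?thesis"
  then have "\<forall>n\<le>N. w n = (if l = X then Y else X)" by (cases l) auto
  then show False using adm unfolding admissible_def by blast
qed

lemma path_fst_surj: "\<exists>i. fst (P i) = u"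
proof (rule unit_steps_surj[of "\<lambda>i. fst (P i)", OF path_fst_unit_steps[OF emb]])
  have increment: "fst (P (n - 1)) < fst (P n)" if "w n = X" for n
    using path_fst_step[OF emb, of n] that by simp
  show "\<exists>n\<ge>N. fst (P (n - 1)) < fst (P n)" for N
    using letter_occurs_above[of N X] increment by blast
  show "\<exists>n\<le>N. fst (P (n - 1)) < fst (P n)" for N
    using letter_occurs_below[of N X] increment by blast
qed

lemma path_snd_surj: "\<exists>i. snd (P i) = v"
proof (rule unit_steps_surj[of "\<lambda>i. snd (P i)", OF path_snd_unit_steps[OF emb]])
  have increment: "snd (P (n - 1)) < snd (P n)" if "w n = Y" for n
    using path_snd_step[OF emb, of n] that by simp
  show "\<exists>n\<ge>N. snd (P (n - 1)) < snd (P n)" for N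
    using letter_occurs_above[of N Y] increment by blast
  show "\<exists>n\<le>N. snd (P (n - 1)) < snd (P n)" for N
    using letter_occurs_below[of N Y] increment by blast
qed

(* Consecutive column vectors are related by a move x, consecutive row vectors by
   a move y; in both cases the determinant is that of a basis, i.e. 1. *)
lemma column_vector_consecutive: "det2 (column_vector w P u) (column_vector w P (u + 1)) = 1"
proof -
  obtain i j where "fst (P i) = u" "fst (P j) = u + 1" using path_fst_surj by metis
  then obtain k where k: "fst (P (k - 1)) = u" "fst (P k) = u + 1"
    using unit_steps_cross[of "\<lambda>i. fst (P i)", OF path_fst_unit_steps[OF emb], of i u j] by auto
  then have "w k = X" using path_fst_step[OF emb, of k] by (auto split: if_splits)
  then show ?thesis
    using column_vector_eq[OF emb k(1)] column_vector_eq[OF emb k(2)]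
      basis_at_step[of w k] basis_at_det[of w "k - 1"] by (cases "basis_at w (k - 1)") auto
qed

lemma row_vector_consecutive: "det2 (row_vector w P (v + 1)) (row_vector w P v) = 1"
proof -
  obtain i j where "snd (P i) = v" "snd (P j) = v + 1" using path_snd_surj by metis
  then obtain k where k: "snd (P (k - 1)) = v" "snd (P k) = v + 1"
    using unit_steps_cross[of "\<lambda>i. snd (P i)", OF path_snd_unit_steps[OF emb], of i v j] by auto
  then have "w k = Y" using path_snd_step[OF emb, of k] by (auto split: if_splits)
  then show ?thesis
    using row_vector_eq[OF emb k(1)] row_vector_eq[OF emb k(2)]
      basis_at_step[of w k] basis_at_det[of w "k - 1"] by (cases "basis_at w (k - 1)") auto
qed

(* det(A(u), B(v)) \<ge> 1 by basis_at_pos, so the truncation to N loses nothing. *)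
lemma frontier_tiling_int: "int (frontier_tiling w P (u, v)) = det2 (column_vector w P u) (row_vector w P v)"
proof -
  obtain i j where ij: "fst (P i) = u" "snd (P j) = v" using path_fst_surj path_snd_surj by metis
  have "det2 (fst (basis_at w i)) (snd (basis_at w j)) \<ge> 1"
    using basis_at_pos[of j i w] basis_at_pos[of i j w] by (cases "j \<le> i") auto
  then show ?thesis
    using column_vector_eq[OF emb ij(1)] row_vector_eq[OF emb ij(2)] by (simp add: frontier_tiling_def)
qed

(* The Pluecker relation with consecutive determinants equal to 1. *)
lemma frontier_tiling_sl2: "sl2_tiling (frontier_tiling w P)"
  unfolding sl2_tiling_def frontier_tiling_int
  using det2_pluecker[of "column_vector w P a" "row_vector w P (b + 1)"
      "column_vector w P (a + 1)" "row_vector w P b" for a b]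
    column_vector_consecutive row_vector_consecutive by simp

lemma frontier_tiling_path: "frontier_tiling w P (P i) = 1"
  using column_vector_eq[OF emb, of i] row_vector_eq[OF emb, of i] basis_at_det[of w i]
  by (simp add: frontier_tiling_def)

(* Every point lies in the column of some P_i and the row of some P_j; it is below
   the frontier if j \<le> i and above otherwise. *)
lemma tiling_unique:
  assumes "sl2_tiling t1" "sl2_tiling t2" "\<forall>i. t1 (P i) = 1" "\<forall>i. t2 (P i) = 1"
  shows "t1 = t2"
proof
  fix p :: "int \<times> int"
  obtain i j where ij: "fst (P i) = fst p" "snd (P j) = snd p" using path_fst_surj path_snd_surj by metis
  show "t1 p = t2 p"
    using tilings_agree_below[OF emb assms, of j i] tilings_agree_above[OF emb assms, of i j] ij
    by (cases "j \<le> i") (auto simp: prod_eq_iff)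
qed

lemma frontier_tiling_below:
  assumes "\<forall>i. P i \<noteq> (u, v)" "snd (P r) = v" "fst (P r) < u"
    "\<forall>i. snd (P i) = v \<and> fst (P i) < u \<longrightarrow> fst (P i) \<le> fst (P r)"
    "fst (P s) = u" "snd (P s) > v"
    "\<forall>i. fst (P i) = u \<and> snd (P i) > v \<longrightarrow> snd (P s) \<le> snd (P i)"
  shows "int (frontier_tiling w P (u, v)) = word_value (map w [r + 2..s - 1])"
  using frontier_tiling_int column_vector_eq[OF emb assms(5)] row_vector_eq[OF emb assms(2)]
    det2_basis_at_word[OF emb word_of_point[OF emb assms]] by simp

end

theorem theorem3:
  fixes w :: "int \<Rightarrow> letter" and P :: "int \<Rightarrow> int \<times> int"
  assumes "admissible w" and "embedding w P"
  shows "(\<exists>!t :: int \<times> int \<Rightarrow> nat. sl2_tiling t \<and> (\<forall>i. t (P i) = 1))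
    \<and> (\<forall>t :: int \<times> int \<Rightarrow> nat. sl2_tiling t \<and> (\<forall>i. t (P i) = 1) \<longrightarrow>
         (\<forall>u v r s.
            (\<forall>i. P i \<noteq> (u, v))
          \<and> (\<exists>i. fst (P i) = u \<and> snd (P i) > v)
          \<and> snd (P r) = v \<and> fst (P r) < u
          \<and> (\<forall>i. snd (P i) = v \<and> fst (P i) < u \<longrightarrow> fst (P i) \<le> fst (P r))
          \<and> fst (P s) = u \<and> snd (P s) > v
          \<and> (\<forall>i. fst (P i) = u \<and> snd (P i) > v \<longrightarrow> snd (P s) \<le> snd (P i))
          \<longrightarrow> int (t (u, v)) = word_value (map w [r + 2..s - 1])))"
proof -
  let ?T = "frontier_tiling w P"
  have T: "sl2_tiling ?T \<and> (\<forall>i. ?T (P i) = 1)"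
    using frontier_tiling_sl2[OF assms] frontier_tiling_path[OF assms] by blast
  have unique: "t = ?T" if "sl2_tiling t \<and> (\<forall>i. t (P i) = 1)" for t
    using tiling_unique[OF assms] T that by blast
  have formula: "int (t (u, v)) = word_value (map w [r + 2..s - 1])"
    if "sl2_tiling t \<and> (\<forall>i. t (P i) = 1)" and "\<forall>i. P i \<noteq> (u, v)"
      and "snd (P r) = v" "fst (P r) < u"
      and "\<forall>i. snd (P i) = v \<and> fst (P i) < u \<longrightarrow> fst (P i) \<le> fst (P r)"
      and "fst (P s) = u" "snd (P s) > v"
      and "\<forall>i. fst (P i) = u \<and> snd (P i) > v \<longrightarrow> snd (P s) \<le> snd (P i)"
    for t u v r s
    using unique[OF that(1)] frontier_tiling_below[OF assms that(2-)] by simp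
  show ?thesis
    using T unique formula by (intro conjI ex1I[of _ ?T]) blast+
qed

end
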